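(* Let $\mathcal F\subseteq 2^{[n]}\setminus\{\emptyset\}$ be a hypergraph which is connected on $[n]$, and let $\widehat{\mathcal F}$ be its building closure. Then $\mathcal F$ is tight if and only if for every $X\in\widehat{\mathcal F}\setminus\{[n]\}$: (1) $\mathcal F_X$ is connected as a hypergraph on $X$, and (2) $\mathcal F^X$ is connected as a hypergraph on $[n]\setminus X$. Moreover condition (1) holds automatically for every $X\in\widehat{\mathcal F}$.
   Context: A building set on $[n]$ is a family $\mathcal B$ of nonempty subsets of $[n]$ containing all singletons and such that $I,J\in\mathcal B$, $I\cap J\neq\emptyset$ imply $I\cup J\in\mathcal B$. The building closure $\widehat{\mathcal F}$ of a hypergraph $\mathcal F$ is the unique minimal building set containing $\mathcal F$. For $X\subseteq[n]$: $\mathcal F_X=\{F\in\mathcal F:F\subseteq X\}$ and $\mathcal F^X=\{F\setminus X: F\in\mathcal F, F\setminus X\neq\emptyset\}$. A hypergraph $\mathcal H$ on a vertex set $S$ is connected if for any $x,y\in S$ there is a sequence $x=z_1,\dots,z_k=y$ in $S$ with each $\{z_i,z_{i+1}\}$ contained in some member of $\mathcal H$. For $F\subseteq[n]$ let $\Delta_F=\mathrm{Conv}\{e_i:i\in F\}$ and $\Delta_{\mathcal F}=\sum_{F\in\mathcal F}\Delta_F$ (Minkowski sum). Writing $\phi_X(x)=\sum_{i\in X}x_i$, one has (known result) $\Delta_{\mathcal F}=\{x\in\mathbb{R}^n:\phi_{[n]}(x)=|\mathcal F|,\ \phi_X(x)\ge|\mathcal F_X| \text{ for all } X\in\widehat{\mathcal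 F}\}$. $\mathcal F$ is called tight (an irredundant basis of $\widehat{\mathcal F}$) if every inequality $\phi_X(x)\ge|\mathcal F_X|$, $X\in\widehat{\mathcal F}\setminus\{[n]\}$, in this description is irredundant (facet-defining). *)

theory Defs
  imports "HOL-Analysis.Analysis"
begin

text \<open>Ground set [n] is modelled as the universe of a finite type 'n; points of R^n are real^'n.\<close>

definition building_set :: "'n set set \<Rightarrow> bool" where
  "building_set B \<longleftrightarrow> {} \<notin> B \<and> (\<forall>i. {i} \<in> B) \<and>
     (\<forall>I\<in>B. \<forall>J\<in>B. I \<inter> J \<noteq> {} \<longrightarrow> I \<union> J \<in> B)"

definition building_closure :: "'n set set \<Rightarrow> 'n set set" where
  "building_closure F = \<Inter> {B. building_set B \<and> F \<subseteq> B}"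

definition restr :: "'n set set \<Rightarrow> 'n set \<Rightarrow> 'n set set" where
  "restr F X = {A \<in> F. A \<subseteq> X}"

definition contr :: "'n set set \<Rightarrow> 'n set \<Rightarrow> 'n set set" where
  "contr F X = {A - X | A. A \<in> F \<and> A - X \<noteq> {}}"

definition hconnected :: "'a set \<Rightarrow> 'a set set \<Rightarrow> bool" where
  "hconnected S H \<longleftrightarrow> (\<forall>x\<in>S. \<forall>y\<in>S.
     (\<lambda>a b. a \<in> S \<and> b \<in> S \<and> (\<exists>E\<in>H. a \<in> E \<and> b \<in> E))\<^sup>*\<^sup>* x y)"

definition simplex_of :: "'n::finite set \<Rightarrow> (real^'n) set" where
  "simplex_of A = convex hull {axis i 1 | i. i \<in> A}"

definition hpoly :: "'n::finite set set \<Rightarrow> (real^'n) set" where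
  "hpoly F = {(\<Sum>A\<in>F. p A) | p. \<forall>A\<in>F. p A \<in> simplex_of A}"

definition phi :: "'n::finite set \<Rightarrow> real^'n \<Rightarrow> real" where
  "phi X x = (\<Sum>i\<in>X. x $ i)"

definition tight :: "'n::finite set set \<Rightarrow> bool" where
  "tight F \<longleftrightarrow> (\<forall>X \<in> building_closure F - {UNIV}.
     {x \<in> hpoly F. phi X x = real (card (restr F X))} facet_of hpoly F)"

end

theory Submission
  imports Defs
begin

text \<open>
  A point of the face \<open>\<phi>\<^sub>X = |F\<^sub>X|\<close> of \<open>\<Delta>\<^sub>F\<close> is a sum of points \<open>p\<^sub>A \<in> \<Delta>\<^sub>A\<close> in which \<open>p\<^sub>A\<close> is
  supported on \<open>A\<close> if \<open>A \<subseteq> X\<close> and on \<open>A - X\<close> otherwise; these traces are exactly the members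
  of \<open>F\<^sub>X\<close> and \<open>F\<^sup>X\<close>. Hence \<open>\<phi>\<^sub>C\<close> is constant on the face for every \<open>C\<close> that no trace crosses, and
  a disconnection of \<open>F\<^sub>X\<close> or \<open>F\<^sup>X\<close> yields three disjoint such sets, so the face has
  codimension at least 3 in \<open>\<real>\<^sup>n\<close>. Conversely, moving the vertex chosen in one \<open>\<Delta>\<^sub>A\<close> from
  \<open>e\<^sub>j\<close> to \<open>e\<^sub>i\<close> stays in the face and moves by \<open>e\<^sub>i - e\<^sub>j\<close>; along connecting paths these
  directions span everything orthogonal to the indicator vectors of \<open>X\<close> and its complement, so
  the face has codimension exactly 2 when both hypergraphs are connected, while \<open>\<Delta>\<^sub>F\<close> itself
  has codimension 1. Condition (1) holds on the building closure because connectedness on two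
  overlapping sets yields connectedness on their union.
\<close>

section \<open>Coordinate sums and probability vectors\<close>

lemma phi_inner: "phi C x = (\<chi> i. of_bool (i \<in> C)) \<bullet> x"
  unfolding phi_def inner_vec_def by (simp add: sum.If_cases if_distrib cong: if_cong)

lemma phi_add: "phi C (x + y) = phi C x + phi C y"
  by (simp add: phi_def sum.distrib)

lemma phi_diff: "phi C (x - y) = phi C x - phi C y"
  by (simp add: phi_def sum_subtractf)

lemma phi_scaleR: "phi C (c *\<^sub>R x) = c * phi C x"
  by (simp add: phi_def sum_distrib_left)

lemma phi_sum: "phi C (sum f S) = (\<Sum>A\<in>S. phi C (f A))"
  unfolding phi_def by (simp add: sum.swap[of _ C])

lemma phi_axis: "phi C (axis i 1) = of_bool (i \<in> C)"
  by (simp add: phi_def axis_def)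

lemma phi_Compl: "phi UNIV x = phi X x + phi (- X) x"
  unfolding phi_def by (metis Compl_eq_Diff_UNIV add.commute finite sum.subset_diff top_greatest)

lemma affine_phi_level: "affine {y. phi C y = b}"
  by (simp add: phi_inner affine_hyperplane)

definition distribution_on :: "'n::finite set \<Rightarrow> real^'n \<Rightarrow> bool" where
  "distribution_on A p \<longleftrightarrow> (\<forall>i. 0 \<le> p $ i) \<and> (\<forall>i. i \<notin> A \<longrightarrow> p $ i = 0) \<and> phi UNIV p = 1"

lemma distribution_on_axis: "distribution_on {i} (axis i 1)"
  unfolding distribution_on_def phi_axis by (simp add: axis_def)

lemma distribution_on_mono: "distribution_on A p \<Longrightarrow> A \<subseteq> B \<Longrightarrow> distribution_on B p"
  unfolding distribution_on_def by blast

lemma distribution_on_simplex_of: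
  assumes "p \<in> simplex_of A" shows "distribution_on A p"
proof -
  have "convex (Collect (distribution_on A))"
    by (rule convexI) (auto simp: distribution_on_def phi_add phi_scaleR)
  moreover have "{axis i 1 | i. i \<in> A} \<subseteq> Collect (distribution_on A)"
    using distribution_on_axis distribution_on_mono by blast
  ultimately have "simplex_of A \<subseteq> Collect (distribution_on A)"
    unfolding simplex_of_def by (rule hull_minimal[rotated])
  with assms show ?thesis by blast
qed

lemma axis_in_simplex_of: "i \<in> A \<Longrightarrow> axis i 1 \<in> simplex_of A"
  unfolding simplex_of_def by (rule hull_inc) auto

lemma distribution_on_phi_nonneg: "distribution_on A p \<Longrightarrow> 0 \<le> phi C p"
  unfolding distribution_on_def phi_def by (auto intro: sum_nonneg)

lemma distribution_on_phi_disjoint: "distribution_on A p \<Longrightarrow> A \<inter> C = {} \<Longrightarrow> phi C p = 0"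
  unfolding distribution_on_def phi_def by (auto intro!: sum.neutral)

lemma distribution_on_phi_superset:
  assumes "distribution_on A p" "A \<subseteq> C" shows "phi C p = 1"
proof -
  have "phi (- C) p = 0" using assms by (intro distribution_on_phi_disjoint) auto
  then show ?thesis using assms(1) phi_Compl[of p C] by (simp add: distribution_on_def)
qed

lemma distribution_on_Diff:
  assumes "distribution_on A p" "phi X p = 0" shows "distribution_on (A - X) p"
proof -
  have "\<forall>i\<in>X. p $ i = 0"
    using assms sum_nonneg_eq_0_iff[of X "\<lambda>i. p $ i"] by (auto simp: distribution_on_def phi_def)
  with assms(1) show ?thesis by (auto simp: distribution_on_def)
qed

lemma phi_sum_distributions:
  fixes p :: "'a \<Rightarrow> real^'n::finite"
  assumes "finite F" "\<And>A. A \<in> F \<Longrightarrow> distribution_on (S A) (p A)"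
    and "\<And>A. A \<in> F \<Longrightarrow> S A \<subseteq> C \<or> S A \<inter> C = {}"
  shows "phi C (sum p F) = real (card {A \<in> F. S A \<subseteq> C})"
proof -
  have "phi C (sum p F) = (\<Sum>A\<in>F. of_bool (S A \<subseteq> C))"
    unfolding phi_sum
  proof (intro sum.cong)
    fix A assume "A \<in> F"
    with assms show "phi C (p A) = of_bool (S A \<subseteq> C)"
      using distribution_on_phi_superset[of "S A" "p A" C] distribution_on_phi_disjoint[of "S A" "p A" C]
      by (cases "S A \<subseteq> C") auto
  qed simp
  also have "\<dots> = real (card {A \<in> F. S A \<subseteq> C})"
    using assms(1) by (simp add: sum_of_bool_eq Collect_conj_eq Int_commute)
  finally show ?thesis .
qed

section \<open>Connected hypergraphs\<close>

lemma hconnected_rtranclp_mono: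
  assumes "hconnected S H" "S \<subseteq> S'" "H \<subseteq> H'" "x \<in> S" "y \<in> S"
  shows "(\<lambda>a b. a \<in> S' \<and> b \<in> S' \<and> (\<exists>E\<in>H'. a \<in> E \<and> b \<in> E))\<^sup>*\<^sup>* x y"
proof -
  have "(\<lambda>a b. a \<in> S \<and> b \<in> S \<and> (\<exists>E\<in>H. a \<in> E \<and> b \<in> E))\<^sup>*\<^sup>* x y"
    using assms(1,4,5) unfolding hconnected_def by blast
  moreover have "(\<lambda>a b. a \<in> S \<and> b \<in> S \<and> (\<exists>E\<in>H. a \<in> E \<and> b \<in> E))
      \<le> (\<lambda>a b. a \<in> S' \<and> b \<in> S' \<and> (\<exists>E\<in>H'. a \<in> E \<and> b \<in> E))"
    using assms(2,3) by auto
  ultimately show ?thesis using rtranclp_mono by (blast dest: predicate2D)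
qed

lemma hconnected_mono:
  assumes "hconnected S H" "H \<subseteq> H'" shows "hconnected S H'"
  unfolding hconnected_def using hconnected_rtranclp_mono[OF assms(1) order_refl assms(2)] by blast

lemma hconnected_Un:
  assumes "hconnected I H" "hconnected J H" "I \<inter> J \<noteq> {}"
  shows "hconnected (I \<union> J) H"
  unfolding hconnected_def
proof (intro ballI)
  fix x y assume "x \<in> I \<union> J" "y \<in> I \<union> J"
  obtain z where "z \<in> I" "z \<in> J" using assms(3) by blast
  let ?R = "\<lambda>a b. a \<in> I \<union> J \<and> b \<in> I \<union> J \<and> (\<exists>E\<in>H. a \<in> E \<and> b \<in> E)"
  have "?R\<^sup>*\<^sup>* u v" if "u \<in> I \<and> v \<in> I \<or> u \<in> J \<and> v \<in> J" for u v
    using that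
  proof
    assume "u \<in> I \<and> v \<in> I"
    then show ?thesis using hconnected_rtranclp_mono[OF assms(1) Un_upper1 order_refl] by blast
  next
    assume "u \<in> J \<and> v \<in> J"
    then show ?thesis using hconnected_rtranclp_mono[OF assms(2) Un_upper2 order_refl] by blast
  qed
  then have "?R\<^sup>*\<^sup>* x z" "?R\<^sup>*\<^sup>* z y"
    using \<open>x \<in> I \<union> J\<close> \<open>y \<in> I \<union> J\<close> \<open>z \<in> I\<close> \<open>z \<in> J\<close> by blast+
  then show "?R\<^sup>*\<^sup>* x y" by (rule rtranclp_trans)
qed

lemma not_hconnected_split:
  assumes "\<not> hconnected S H"
  obtains C where "C \<subseteq> S" "C \<noteq> {}" "S - C \<noteq> {}" "\<And>E. E \<in> H \<Longrightarrow> E \<subseteq> S \<Longrightarrow> E \<subseteq> C \<or> E \<inter> C = {}"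
proof -
  let ?R = "\<lambda>a b. a \<in> S \<and> b \<in> S \<and> (\<exists>E\<in>H. a \<in> E \<and> b \<in> E)"
  obtain x y where xy: "x \<in> S" "y \<in> S" "\<not> ?R\<^sup>*\<^sup>* x y"
    using assms unfolding hconnected_def by blast
  let ?C = "{z \<in> S. ?R\<^sup>*\<^sup>* x z}"
  have "E \<subseteq> ?C \<or> E \<inter> ?C = {}" if "E \<in> H" "E \<subseteq> S" for E
  proof (rule disjCI)
    assume "E \<inter> ?C \<noteq> {}"
    then obtain a where "a \<in> E" "?R\<^sup>*\<^sup>* x a" by blast
    with that show "E \<subseteq> ?C" by (auto intro: rtranclp.rtrancl_into_rtrancl)
  qed
  moreover have "x \<in> ?C" "y \<in> S - ?C" using xy by auto
  ultimately show thesis by (intro that[of ?C]) blast+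
qed

lemma hconnected_diff_in_subspace:
  fixes f :: "'a \<Rightarrow> 'b::real_vector"
  assumes "subspace L" "hconnected S H"
    and "\<And>E a b. E \<in> H \<Longrightarrow> a \<in> E \<Longrightarrow> b \<in> E \<Longrightarrow> f a - f b \<in> L"
    and "i \<in> S" "j \<in> S"
  shows "f i - f j \<in> L"
proof -
  have "(\<lambda>a b. a \<in> S \<and> b \<in> S \<and> (\<exists>E\<in>H. a \<in> E \<and> b \<in> E))\<^sup>*\<^sup>* i j"
    using assms(2,4,5) unfolding hconnected_def by blast
  then show ?thesis
  proof (induction rule: rtranclp_induct)
    case base
    then show ?case by (simp add: subspace_0[OF assms(1)])
  next
    case (step k l)
    then have "(f i - f k) + (f k - f l) \<in> L"
      using assms(1,3) by (blast intro: subspace_add)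
    then show ?case by simp
  qed
qed

section \<open>The polytope and its faces\<close>

lemma convex_simplex_of: "convex (simplex_of A)"
  by (simp add: simplex_of_def)

lemma sum_in_hpoly: "(\<And>A. A \<in> F \<Longrightarrow> p A \<in> simplex_of A) \<Longrightarrow> sum p F \<in> hpoly F"
  unfolding hpoly_def by blast

lemma hpolyE:
  assumes "x \<in> hpoly F"
  obtains p where "\<And>A. A \<in> F \<Longrightarrow> p A \<in> simplex_of A" "x = sum p F"
  using assms unfolding hpoly_def by blast

lemma convex_hpoly:
  fixes F :: "'n::finite set set"
  shows "convex (hpoly F)"
proof (rule convexI)
  fix x y :: "real^'n" and u v :: real
  assume x: "x \<in> hpoly F" and y: "y \<in> hpoly F" and uv: "0 \<le> u" "0 \<le> v" "u + v = 1"
  obtain p where p: "\<And>A. A \<in> F \<Longrightarrow> p A \<in> simplex_of A" "x = sum p F"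
    using hpolyE[OF x] by blast
  obtain q where q: "\<And>A. A \<in> F \<Longrightarrow> q A \<in> simplex_of A" "y = sum q F"
    using hpolyE[OF y] by blast
  have "u *\<^sub>R x + v *\<^sub>R y = (\<Sum>A\<in>F. u *\<^sub>R p A + v *\<^sub>R q A)"
    by (simp add: p q scaleR_sum_right sum.distrib)
  also have "\<dots> \<in> hpoly F"
    using p q uv by (intro sum_in_hpoly convexD[OF convex_simplex_of]) auto
  finally show "u *\<^sub>R x + v *\<^sub>R y \<in> hpoly F" .
qed

lemma phi_sum_simplices:
  fixes F :: "'n::finite set set"
  assumes "\<And>A. A \<in> F \<Longrightarrow> p A \<in> simplex_of A"
  shows "phi X (sum p F) = real (card (restr F X)) + (\<Sum>A\<in>F - restr F X. phi X (p A))"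
proof -
  have "phi X (sum p F) = (\<Sum>A\<in>F - restr F X. phi X (p A)) + (\<Sum>A\<in>restr F X. phi X (p A))"
    unfolding phi_sum by (rule sum.subset_diff) (auto simp: restr_def)
  also have "(\<Sum>A\<in>restr F X. phi X (p A)) = (\<Sum>A\<in>restr F X. 1)"
  proof (rule sum.cong)
    fix A assume "A \<in> restr F X"
    then have "A \<in> F" "A \<subseteq> X" by (auto simp: restr_def)
    then show "phi X (p A) = 1"
      using distribution_on_phi_superset distribution_on_simplex_of assms by metis
  qed simp
  finally show ?thesis by simp
qed

lemma hpoly_phi_ge:
  fixes F :: "'n::finite set set"
  assumes "x \<in> hpoly F" shows "real (card (restr F X)) \<le> phi X x"
proof -
  obtain p where p: "\<And>A. A \<in> F \<Longrightarrow> p A \<in> simplex_of A" "x = sum p F"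
    using hpolyE[OF assms] by blast
  have "0 \<le> phi X (p A)" if "A \<in> F" for A
    using distribution_on_phi_nonneg distribution_on_simplex_of p(1) that by metis
  then have "0 \<le> (\<Sum>A\<in>F - restr F X. phi X (p A))"
    by (intro sum_nonneg) blast
  with phi_sum_simplices[of F p X] p show ?thesis by simp
qed

lemma hpoly_phi_UNIV:
  fixes F :: "'n::finite set set"
  assumes "x \<in> hpoly F" shows "phi UNIV x = real (card F)"
proof -
  obtain p where "\<And>A. A \<in> F \<Longrightarrow> p A \<in> simplex_of A" "x = sum p F"
    using hpolyE[OF assms] by blast
  moreover have "restr F UNIV = F" by (auto simp: restr_def)
  ultimately show ?thesis using phi_sum_simplices[of F p UNIV] by simp
qed

abbreviation hface :: "'n::finite set set \<Rightarrow> 'n set \<Rightarrow> (real^'n) set" where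
  "hface F X \<equiv> {x \<in> hpoly F. phi X x = real (card (restr F X))}"

lemma hface_face_of:
  fixes F :: "'n::finite set set"
  shows "hface F X face_of hpoly F"
proof -
  let ?w = "\<chi> i. of_bool (i \<in> X) :: real^'n"
  have "hface F X = hpoly F \<inter> {x. ?w \<bullet> x = real (card (restr F X))}"
    by (auto simp: phi_inner)
  also have "\<dots> face_of hpoly F"
  proof (rule face_of_Int_supporting_hyperplane_ge)
    show "\<And>x. x \<in> hpoly F \<Longrightarrow> real (card (restr F X)) \<le> ?w \<bullet> x"
      using hpoly_phi_ge by (simp add: phi_inner)
  qed (rule convex_hpoly)
  finally show ?thesis .
qed

lemma hface_UNIV: "hface F UNIV = hpoly F"
  using hpoly_phi_UNIV by (auto simp: restr_def)

text \<open>The support of the summand for \<open>A\<close> in a point of \<open>hface F X\<close>.\<close>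

definition face_trace :: "'a set \<Rightarrow> 'a set \<Rightarrow> 'a set" where
  "face_trace X A = (if A \<subseteq> X then A else A - X)"

lemma face_trace_subset: "face_trace X A \<subseteq> A"
  by (simp add: face_trace_def)

lemma hface_decomposition:
  fixes F :: "'n::finite set set"
  assumes "x \<in> hface F X"
  obtains p where "\<And>A. A \<in> F \<Longrightarrow> distribution_on (face_trace X A) (p A)" "x = sum p F"
proof -
  obtain p where p: "\<And>A. A \<in> F \<Longrightarrow> p A \<in> simplex_of A" "x = sum p F"
    using assms hpolyE[of x F] by blast
  have "(\<Sum>A\<in>F - restr F X. phi X (p A)) = 0"
    using phi_sum_simplices[of F p X] p assms by simp
  moreover have "0 \<le> phi X (p A)" if "A \<in> F" for A
    using that p distribution_on_simplex_of distribution_on_phi_nonneg by blast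
  ultimately have vanish: "\<forall>A\<in>F - restr F X. phi X (p A) = 0"
    using sum_nonneg_eq_0_iff[of "F - restr F X" "\<lambda>A. phi X (p A)"] by simp
  have "distribution_on (face_trace X A) (p A)" if "A \<in> F" for A
  proof (cases "A \<subseteq> X")
    case True
    then show ?thesis using distribution_on_simplex_of[OF p(1)[OF that]] by (simp add: face_trace_def)
  next
    case False
    then have "phi X (p A) = 0" using vanish that by (simp add: restr_def)
    then show ?thesis
      using False distribution_on_Diff distribution_on_simplex_of[OF p(1)[OF that]]
      by (simp add: face_trace_def)
  qed
  with p show thesis using that by blast
qed

lemma vertex_sum_in_hface:
  fixes F :: "'n::finite set set"
  assumes "\<And>A. A \<in> F \<Longrightarrow> c A \<in> face_trace X A"
  shows "(\<Sum>A\<in>F. axis (c A) 1) \<in> hface F X"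
proof
  have "c A \<in> X \<longleftrightarrow> A \<subseteq> X" if "A \<in> F" for A
    using assms[OF that] by (auto simp: face_trace_def split: if_splits)
  then have "{A \<in> F. {c A} \<subseteq> X} = restr F X" by (auto simp: restr_def)
  moreover have "phi X (\<Sum>A\<in>F. axis (c A) 1) = real (card {A \<in> F. {c A} \<subseteq> X})"
    by (rule phi_sum_distributions) (auto simp: distribution_on_axis)
  moreover have "(\<Sum>A\<in>F. axis (c A) 1) \<in> hpoly F"
    using subsetD[OF face_trace_subset assms] by (intro sum_in_hpoly axis_in_simplex_of)
  ultimately show "(\<Sum>A\<in>F. axis (c A) 1) \<in> hpoly F \<and> phi X (\<Sum>A\<in>F. axis (c A) 1) = real (card (restr F X))"
    by simp
qed

section \<open>Level sets of block sums\<close>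

lemma affine_phi_levels: "affine {y. \<forall>C\<in>\<C>. phi C y = b C}"
proof -
  have "{y. \<forall>C\<in>\<C>. phi C y = b C} = \<Inter>((\<lambda>C. {y. phi C y = b C}) ` \<C>)" by auto
  also have "affine \<dots>" by (rule affine_Inter) (auto simp: affine_phi_level)
  finally show ?thesis .
qed

lemma aff_dim_affine_Int_phi_level:
  fixes S :: "(real^'n::finite) set"
  assumes "affine S" "x \<in> S" "phi C x = b" "y \<in> S" "phi C y \<noteq> b"
  shows "aff_dim (S \<inter> {z. phi C z = b}) = aff_dim S - 1"
  using aff_dim_affine_Int_hyperplane[OF assms(1), of "\<chi> i. of_bool (i \<in> C)" b] assms
  unfolding phi_inner by auto

lemma phi_block_witness:
  fixes \<C> :: "'n::finite set set"
  assumes "disjoint \<C>" "\<And>D. D \<in> \<C> \<Longrightarrow> c D \<in> D" "C \<in> \<C>"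
  shows "phi C (\<Sum>D\<in>\<C>. b D *\<^sub>R axis (c D) 1) = b C"
proof -
  have "c D \<in> C \<longleftrightarrow> D = C" if "D \<in> \<C>" for D
    using assms that by (auto simp: disjnt_def pairwise_def)
  then have "phi C (\<Sum>D\<in>\<C>. b D *\<^sub>R axis (c D) 1) = (\<Sum>D\<in>\<C>. if D = C then b D else 0)"
    by (auto simp: phi_sum phi_scaleR phi_axis intro!: sum.cong)
  with assms(3) show ?thesis by simp
qed

lemma aff_dim_phi_levels:
  fixes \<C> :: "'n::finite set set"
  assumes "disjoint \<C>" "{} \<notin> \<C>"
  shows "aff_dim {y::real^'n. \<forall>C\<in>\<C>. phi C y = b C} = int CARD('n) - int (card \<C>)"
  using finite[of \<C>] assms
proof (induction \<C> rule: finite_induct)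
  case empty
  then show ?case by simp
next
  case (insert C \<C>)
  define c where "c D = (SOME i. i \<in> D)" for D :: "'n set"
  have c: "c D \<in> D" if "D \<in> insert C \<C>" for D
    using insert.prems(2) that some_in_eq unfolding c_def by blast
  have "disjoint \<C>" using insert.prems(1) by (simp add: pairwise_insert)
  then have IH: "aff_dim {y::real^'n. \<forall>D\<in>\<C>. phi D y = b D} = int CARD('n) - int (card \<C>)"
    using insert by simp
  have c_notin: "c C \<notin> D" if "D \<in> \<C>" for D
    using insert.hyps(2) insert.prems(1) c[of C] that by (auto simp: pairwise_insert disjnt_def)
  define x :: "real^'n" where "x = (\<Sum>D\<in>insert C \<C>. b D *\<^sub>R axis (c D) 1)"
  have x: "phi D x = b D" if "D \<in> insert C \<C>" for D
    unfolding x_def using insert.prems(1) c that by (rule phi_block_witness)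
  have y: "phi D (x + axis (c C) 1) = b D + of_bool (D = C)" if "D \<in> insert C \<C>" for D
    using x[OF that] that c_notin c[of C] insert.hyps(2) by (auto simp: phi_add phi_axis)
  have "aff_dim ({y::real^'n. \<forall>D\<in>\<C>. phi D y = b D} \<inter> {y. phi C y = b C})
      = aff_dim {y::real^'n. \<forall>D\<in>\<C>. phi D y = b D} - 1"
  proof (rule aff_dim_affine_Int_phi_level[OF affine_phi_levels])
    show "x \<in> {y. \<forall>D\<in>\<C>. phi D y = b D}" "phi C x = b C" using x by auto
    show "x + axis (c C) 1 \<in> {y. \<forall>D\<in>\<C>. phi D y = b D}"
      using y insert.hyps(2) by auto
    show "phi C (x + axis (c C) 1) \<noteq> b C" using y by simp
  qed
  moreover have "{y. \<forall>D\<in>insert C \<C>. phi D y = b D}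
      = {y::real^'n. \<forall>D\<in>\<C>. phi D y = b D} \<inter> {y. phi C y = b C}" by auto
  ultimately show ?case using IH insert.hyps by simp
qed

lemma balanced_vectors_subset_subspace:
  fixes L :: "(real^'n::finite) set"
  assumes "subspace L" "\<Union>\<C> = UNIV" "disjoint \<C>"
    and "\<And>C i j. C \<in> \<C> \<Longrightarrow> i \<in> C \<Longrightarrow> j \<in> C \<Longrightarrow> axis i 1 - axis j 1 \<in> L"
  shows "{v. \<forall>C\<in>\<C>. phi C v = 0} \<subseteq> L"
proof
  fix v :: "real^'n" assume v: "v \<in> {v. \<forall>C\<in>\<C>. phi C v = 0}"
  have block: "(\<Sum>i\<in>C. v $ i *\<^sub>R axis i 1) \<in> L" if "C \<in> \<C>" for C
  proof (cases "C = {}")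
    case False
    then obtain j where j: "j \<in> C" by blast
    have "(\<Sum>i\<in>C. v $ i *\<^sub>R axis i 1)
        = (\<Sum>i\<in>C. v $ i *\<^sub>R (axis i 1 - axis j 1)) + phi C v *\<^sub>R axis j 1"
      by (simp add: phi_def scaleR_diff_right sum_subtractf scaleR_sum_left)
    also have "\<dots> = (\<Sum>i\<in>C. v $ i *\<^sub>R (axis i 1 - axis j 1))"
      using v that by simp
    also have "\<dots> \<in> L"
      using assms(1,4) that j by (intro subspace_sum subspace_scale) auto
    finally show ?thesis .
  qed (simp add: subspace_0[OF assms(1)])
  have "v = (\<Sum>i\<in>\<Union>\<C>. v $ i *\<^sub>R axis i 1)"
    using basis_expansion[of v] assms(2) by (simp add: scalar_mult_eq_scaleR)
  also have "\<dots> = (\<Sum>C\<in>\<C>. \<Sum>i\<in>C. v $ i *\<^sub>R axis i 1)"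
    using sum.Union_disjoint[of \<C> "\<lambda>i. v $ i *\<^sub>R axis i 1"] assms(3)
    by (auto simp: pairwise_def disjnt_def)
  also have "\<dots> \<in> L"
    using block by (rule subspace_sum[OF assms(1)])
  finally show "v \<in> L" .
qed

lemma level_set_subset_affine_hull:
  fixes T :: "(real^'n::finite) set"
  assumes "a \<in> T" "\<Union>\<C> = UNIV" "disjoint \<C>"
    and "\<And>C i j. C \<in> \<C> \<Longrightarrow> i \<in> C \<Longrightarrow> j \<in> C \<Longrightarrow> axis i 1 - axis j 1 \<in> (\<lambda>x. x - a) ` (affine hull T)"
  shows "{y. \<forall>C\<in>\<C>. phi C y = phi C a} \<subseteq> affine hull T"
proof
  fix y assume "y \<in> {y. \<forall>C\<in>\<C>. phi C y = phi C a}"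
  then have "y - a \<in> {v. \<forall>C\<in>\<C>. phi C v = 0}" by (simp add: phi_diff)
  also have "\<dots> \<subseteq> (\<lambda>x. x - a) ` (affine hull T)"
    using assms by (intro balanced_vectors_subset_subspace affine_diffs_subspace_subtract) (auto intro: hull_inc)
  finally show "y \<in> affine hull T" by auto
qed

lemma diff_in_affine_hull_directions:
  fixes T :: "'a::real_vector set"
  assumes "a \<in> T" "x \<in> T" "y \<in> T"
  shows "x - y \<in> (\<lambda>z. z - a) ` (affine hull T)"
proof -
  have L: "subspace ((\<lambda>z. z - a) ` (affine hull T))"
    using assms(1) by (intro affine_diffs_subspace_subtract) (auto intro: hull_inc)
  have "x - a \<in> (\<lambda>z. z - a) ` (affine hull T)" "y - a \<in> (\<lambda>z. z - a) ` (affine hull T)"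
    using assms by (auto intro: hull_inc)
  from subspace_diff[OF L this] show ?thesis by simp
qed

lemma sum_fun_upd_diff:
  fixes f :: "'b \<Rightarrow> 'c::ab_group_add"
  assumes "finite F" "E \<in> F"
  shows "(\<Sum>A\<in>F. f ((c(E := i)) A)) - (\<Sum>A\<in>F. f ((c(E := j)) A)) = f i - f j"
  using assms by (simp add: sum.remove[of F E] sum.cong[of "F - {E}" _ "\<lambda>A. f ((c(E := _)) A)" "\<lambda>A. f (c A)"])

section \<open>Dimension of the faces\<close>

lemma face_trace_subset_side: "face_trace X A \<subseteq> X \<or> face_trace X A \<subseteq> - X"
  by (auto simp: face_trace_def)

lemma face_trace_nonempty: "A \<noteq> {} \<Longrightarrow> face_trace X A \<noteq> {}"
  by (auto simp: face_trace_def)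

lemma face_trace_choice:
  assumes "{} \<notin> F"
  obtains c where "\<And>A. A \<in> F \<Longrightarrow> c A \<in> face_trace X A"
proof -
  have "\<forall>A\<in>F. \<exists>i. i \<in> face_trace X A"
    using assms by (metis ex_in_conv face_trace_nonempty)
  from bchoice[OF this] obtain c where "\<forall>A\<in>F. c A \<in> face_trace X A" ..
  then show thesis using that by blast
qed

lemma restr_eq_face_traces: "restr F X = {E \<in> face_trace X ` F. E \<subseteq> X}"
proof -
  have "face_trace X A \<subseteq> X \<longleftrightarrow> A \<subseteq> X" for A
    by (auto simp: face_trace_def)
  then show ?thesis by (auto simp: restr_def face_trace_def)
qed

lemma contr_eq_face_traces:
  assumes "{} \<notin> F" shows "contr F X = {E \<in> face_trace X ` F. E \<subseteq> - X}"
proof -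
  have side: "face_trace X A \<subseteq> - X \<longleftrightarrow> A - X \<noteq> {}" if "A \<in> F" for A
  proof -
    have "A \<noteq> {}" using assms that by blast
    then show ?thesis by (auto simp: face_trace_def)
  qed
  have trace: "face_trace X A = A - X" if "A - X \<noteq> {}" for A
    using that by (auto simp: face_trace_def)
  show ?thesis
  proof (intro set_eqI iffI)
    fix E assume "E \<in> contr F X"
    then obtain A where A: "A \<in> F" "E = A - X" "A - X \<noteq> {}" by (auto simp: contr_def)
    with trace have "E = face_trace X A" by simp
    with A side show "E \<in> {E \<in> face_trace X ` F. E \<subseteq> - X}" by blast
  next
    fix E assume "E \<in> {E \<in> face_trace X ` F. E \<subseteq> - X}"
    then obtain A where "A \<in> F" "E = face_trace X A" "E \<subseteq> - X" by blast
    with side trace show "E \<in> contr F X" by (auto simp: contr_def)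
  qed
qed

lemma hface_subset_phi_levels:
  fixes F :: "'n::finite set set"
  assumes "\<And>C A. C \<in> \<C> \<Longrightarrow> A \<in> F \<Longrightarrow> face_trace X A \<subseteq> C \<or> face_trace X A \<inter> C = {}"
  shows "hface F X \<subseteq> {y. \<forall>C\<in>\<C>. phi C y = real (card {A \<in> F. face_trace X A \<subseteq> C})}"
proof
  fix x assume "x \<in> hface F X"
  then obtain p where p: "\<And>A. A \<in> F \<Longrightarrow> distribution_on (face_trace X A) (p A)" "x = sum p F"
    using hface_decomposition by blast
  moreover have "phi C (sum p F) = real (card {A \<in> F. face_trace X A \<subseteq> C})" if "C \<in> \<C>" for C
    by (rule phi_sum_distributions) (use p assms that in auto)
  ultimately show "x \<in> {y. \<forall>C\<in>\<C>. phi C y = real (card {A \<in> F. face_trace X A \<subseteq> C})}"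
    by simp
qed

lemma aff_dim_hface_le:
  fixes F :: "'n::finite set set"
  assumes "disjoint \<C>" "{} \<notin> \<C>"
    and "\<And>C A. C \<in> \<C> \<Longrightarrow> A \<in> F \<Longrightarrow> face_trace X A \<subseteq> C \<or> face_trace X A \<inter> C = {}"
  shows "aff_dim (hface F X) \<le> int CARD('n) - int (card \<C>)"
  using aff_dim_subset[OF hface_subset_phi_levels[of \<C> F X, OF assms(3)]] aff_dim_phi_levels[OF assms(1,2)]
  by simp

lemma axis_diff_in_hface_directions:
  fixes F :: "'n::finite set set"
  assumes "{} \<notin> F" "a \<in> hface F X" "E \<in> face_trace X ` F" "i \<in> E" "j \<in> E"
  shows "axis i 1 - axis j 1 \<in> (\<lambda>x. x - a) ` (affine hull (hface F X))"
proof -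
  obtain A where A: "A \<in> F" "E = face_trace X A" using assms(3) by blast
  obtain c where c: "\<And>A. A \<in> F \<Longrightarrow> c A \<in> face_trace X A"
    using face_trace_choice[OF assms(1)] by blast
  have "(\<Sum>B\<in>F. axis ((c(A := k)) B) 1) \<in> hface F X" if "k \<in> E" for k
    using c that A by (intro vertex_sum_in_hface) auto
  from diff_in_affine_hull_directions[OF assms(2) this[OF assms(4)] this[OF assms(5)]]
  show ?thesis unfolding sum_fun_upd_diff[OF finite A(1), where f = "\<lambda>k. axis k 1"] .
qed

lemma phi_levels_subset_affine_hull_hface:
  fixes F :: "'n::finite set set"
  assumes "{} \<notin> F" "a \<in> hface F X" "hconnected X (restr F X)" "hconnected (- X) (contr F X)"
  shows "{y. \<forall>C\<in>{X, - X} - {{}}. phi C y = phi C a} \<subseteq> affine hull (hface F X)"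
proof (rule level_set_subset_affine_hull[OF assms(2)])
  let ?L = "(\<lambda>x. x - a) ` (affine hull (hface F X))"
  have L: "subspace ?L"
    using assms(2) by (intro affine_diffs_subspace_subtract) (auto intro: hull_inc)
  have "restr F X \<subseteq> face_trace X ` F" "contr F X \<subseteq> face_trace X ` F"
    using restr_eq_face_traces[of F X] contr_eq_face_traces[OF assms(1), of X] by blast+
  then have edge: "axis i 1 - axis j 1 \<in> ?L"
    if "E \<in> restr F X \<union> contr F X" "i \<in> E" "j \<in> E" for E i j
    using that axis_diff_in_hface_directions[OF assms(1,2)] by blast
  have inner: "axis i 1 - axis j 1 \<in> ?L" if "i \<in> X" "j \<in> X" for i j
    by (rule hconnected_diff_in_subspace[OF L assms(3)]) (use that edge in auto)
  have outer: "axis i 1 - axis j 1 \<in> ?L" if "i \<in> - X" "j \<in> - X" for i j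
    by (rule hconnected_diff_in_subspace[OF L assms(4)]) (use that edge in auto)
  show "axis i 1 - axis j 1 \<in> ?L" if "C \<in> {X, - X} - {{}}" "i \<in> C" "j \<in> C" for C i j
  proof -
    have "C = X \<or> C = - X" using that(1) by blast
    with that(2,3) show ?thesis using inner outer by blast
  qed
qed (auto simp: pairwise_def disjnt_def)

lemma aff_dim_hface:
  fixes F :: "'n::finite set set"
  assumes "{} \<notin> F" "hconnected X (restr F X)" "hconnected (- X) (contr F X)"
  shows "hface F X \<noteq> {}" "aff_dim (hface F X) = int CARD('n) - int (card ({X, - X} - {{}}))"
proof -
  let ?\<C> = "{X, - X} - {{}}"
  obtain c where "\<And>A. A \<in> F \<Longrightarrow> c A \<in> face_trace X A"
    using face_trace_choice[OF assms(1)] by blast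
  then have a: "(\<Sum>A\<in>F. axis (c A) 1) \<in> hface F X" (is "?a \<in> _")
    by (rule vertex_sum_in_hface)
  then show "hface F X \<noteq> {}" by blast
  have \<C>: "disjoint ?\<C>" "{} \<notin> ?\<C>"
    by (auto simp: pairwise_def disjnt_def)
  have "aff_dim {y. \<forall>C\<in>?\<C>. phi C y = phi C ?a} \<le> aff_dim (affine hull (hface F X))"
    using phi_levels_subset_affine_hull_hface[OF assms(1) a assms(2,3)] by (rule aff_dim_subset)
  then have "int CARD('n) - int (card ?\<C>) \<le> aff_dim (hface F X)"
    using aff_dim_phi_levels[OF \<C>, of "\<lambda>C. phi C ?a"] by simp
  moreover have "aff_dim (hface F X) \<le> int CARD('n) - int (card ?\<C>)"
    using \<C> by (rule aff_dim_hface_le) (use face_trace_subset_side[of X] in blast)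
  ultimately show "aff_dim (hface F X) = int CARD('n) - int (card ?\<C>)" by simp
qed

lemma aff_dim_hpoly:
  fixes F :: "'n::finite set set"
  assumes "{} \<notin> F" "hconnected UNIV F"
  shows "aff_dim (hpoly F) = int CARD('n) - 1"
proof -
  have "restr F UNIV = F" by (auto simp: restr_def)
  moreover have "hconnected (- UNIV) (contr F UNIV)" by (simp add: hconnected_def)
  ultimately have "aff_dim (hface F UNIV) = int CARD('n) - int (card ({UNIV :: 'n set, - UNIV} - {{}}))"
    using assms by (intro aff_dim_hface(2)) auto
  moreover have "{UNIV, - UNIV} - {{}} = {UNIV :: 'n set}" by auto
  ultimately show ?thesis unfolding hface_UNIV by simp
qed

lemma aff_dim_hface_split:
  fixes F :: "'n::finite set set"
  assumes "S = X \<or> S = - X" "C \<subseteq> S" "C \<noteq> {}" "S - C \<noteq> {}" "- S \<noteq> {}"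
    and "\<And>A. A \<in> F \<Longrightarrow> face_trace X A \<subseteq> S \<Longrightarrow> face_trace X A \<subseteq> C \<or> face_trace X A \<inter> C = {}"
  shows "aff_dim (hface F X) \<le> int CARD('n) - 3"
proof -
  let ?\<C> = "{C, S - C, - S}"
  have side: "face_trace X A \<subseteq> S \<or> face_trace X A \<subseteq> - S" for A
    using assms(1) face_trace_subset_side[of X A] by auto
  have "C \<noteq> S - C" "C \<noteq> - S" "S - C \<noteq> - S"
    using assms(2-5) by blast+
  then have "card ?\<C> = 3" by simp
  moreover have "disjoint ?\<C>" "{} \<notin> ?\<C>"
    using assms(2-5) by (auto simp: pairwise_def disjnt_def)
  moreover have "face_trace X A \<subseteq> D \<or> face_trace X A \<inter> D = {}" if "D \<in> ?\<C>" "A \<in> F" for D A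
    using side[of A]
  proof
    assume "face_trace X A \<subseteq> S"
    with assms(6)[OF that(2)] that(1) show ?thesis by blast
  next
    assume "face_trace X A \<subseteq> - S"
    with assms(2) that(1) show ?thesis by blast
  qed
  ultimately show ?thesis using aff_dim_hface_le[of ?\<C> F X] by simp
qed

lemma aff_dim_hface_disconnected:
  fixes F :: "'n::finite set set"
  assumes "{} \<notin> F" "X \<noteq> {}" "X \<noteq> UNIV"
    and "\<not> (hconnected X (restr F X) \<and> hconnected (- X) (contr F X))"
  shows "aff_dim (hface F X) \<le> int CARD('n) - 3"
proof (cases "hconnected X (restr F X)")
  case False
  then obtain C where C: "C \<subseteq> X" "C \<noteq> {}" "X - C \<noteq> {}"
    and split: "\<And>E. E \<in> restr F X \<Longrightarrow> E \<subseteq> X \<Longrightarrow> E \<subseteq> C \<or> E \<inter> C = {}"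
    using not_hconnected_split[OF False] by blast
  have "face_trace X A \<in> restr F X" if "A \<in> F" "face_trace X A \<subseteq> X" for A
    using that by (auto simp: restr_eq_face_traces)
  with split have "face_trace X A \<subseteq> C \<or> face_trace X A \<inter> C = {}"
    if "A \<in> F" "face_trace X A \<subseteq> X" for A
    using that by blast
  moreover have "- X \<noteq> {}" using assms(3) by blast
  ultimately show ?thesis by (intro aff_dim_hface_split[of X X C]) (use C in auto)
next
  case True
  with assms(4) have "\<not> hconnected (- X) (contr F X)" by blast
  then obtain C where C: "C \<subseteq> - X" "C \<noteq> {}" "- X - C \<noteq> {}"
    and split: "\<And>E. E \<in> contr F X \<Longrightarrow> E \<subseteq> - X \<Longrightarrow> E \<subseteq> C \<or> E \<inter> C = {}"
    using not_hconnected_split by blast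
  have "face_trace X A \<in> contr F X" if "A \<in> F" "face_trace X A \<subseteq> - X" for A
    using that by (auto simp: contr_eq_face_traces[OF assms(1)])
  with split have "face_trace X A \<subseteq> C \<or> face_trace X A \<inter> C = {}"
    if "A \<in> F" "face_trace X A \<subseteq> - X" for A
    using that by blast
  then show ?thesis by (intro aff_dim_hface_split[of "- X" X C]) (use C assms(2) in auto)
qed

lemma hface_facet_of_iff:
  fixes F :: "'n::finite set set"
  assumes "{} \<notin> F" "hconnected UNIV F" "X \<noteq> {}" "X \<noteq> UNIV"
  shows "hface F X facet_of hpoly F \<longleftrightarrow> hconnected X (restr F X) \<and> hconnected (- X) (contr F X)"
proof -
  have poly: "aff_dim (hpoly F) = int CARD('n) - 1"
    using assms(1,2) by (rule aff_dim_hpoly)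
  have "X \<noteq> - X" using assms(3) by blast
  then have two: "card {X, - X} = 2" by simp
  show ?thesis
  proof
    assume "hface F X facet_of hpoly F"
    then have "aff_dim (hface F X) = int CARD('n) - 2"
      using poly by (simp add: facet_of_def)
    then show "hconnected X (restr F X) \<and> hconnected (- X) (contr F X)"
      using aff_dim_hface_disconnected[OF assms(1,3,4)] by fastforce
  next
    assume conn: "hconnected X (restr F X) \<and> hconnected (- X) (contr F X)"
    have "{X, - X} - {{}} = {X, - X}" using assms(3,4) by auto
    then show "hface F X facet_of hpoly F"
      using aff_dim_hface[OF assms(1)] conn poly two hface_face_of[of F X]
      by (simp add: facet_of_def)
  qed
qed

section \<open>The building closure\<close>

lemma building_closure_least: "building_set B \<Longrightarrow> F \<subseteq> B \<Longrightarrow> building_closure F \<subseteq> B"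
  unfolding building_closure_def by blast

lemma building_closure_nonempty:
  assumes "{} \<notin> F" "X \<in> building_closure F" shows "X \<noteq> {}"
proof -
  have "building_set {X. X \<noteq> {}}" unfolding building_set_def by auto
  with assms show ?thesis using building_closure_least[of "{X. X \<noteq> {}}" F] by blast
qed

lemma hconnected_building_closure:
  assumes "{} \<notin> F" "X \<in> building_closure F"
  shows "hconnected X (restr F X)"
proof -
  let ?B = "{X. X \<noteq> {} \<and> hconnected X (restr F X)}"
  have "I \<union> J \<in> ?B" if "I \<in> ?B" "J \<in> ?B" "I \<inter> J \<noteq> {}" for I J
  proof -
    have "restr F I \<subseteq> restr F (I \<union> J)" "restr F J \<subseteq> restr F (I \<union> J)"
      by (auto simp: restr_def)
    then have "hconnected I (restr F (I \<union> J))" "hconnected J (restr F (I \<union> J))"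
      using that(1,2) hconnected_mono by blast+
    with that(3) show ?thesis using hconnected_Un by blast
  qed
  moreover have "{i} \<in> ?B" for i by (simp add: hconnected_def)
  ultimately have "building_set ?B" unfolding building_set_def by blast
  moreover have "hconnected A (restr F A)" if "A \<in> F" for A
    unfolding hconnected_def restr_def using that by (intro ballI r_into_rtranclp) auto
  then have "F \<subseteq> ?B" using assms(1) by blast
  ultimately show ?thesis using building_closure_least assms(2) by blast
qed

theorem mainTheorem8:
  fixes F :: "'n::finite set set"
  assumes "{} \<notin> F"
    and "hconnected UNIV F"
  shows "(tight F \<longleftrightarrow> (\<forall>X \<in> building_closure F - {UNIV}.
            hconnected X (restr F X) \<and> hconnected (UNIV - X) (contr F X)))
         \<and> (\<forall>X \<in> building_closure F. hconnected X (restr F X))"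
proof
  have "hface F X facet_of hpoly F \<longleftrightarrow> hconnected X (restr F X) \<and> hconnected (UNIV - X) (contr F X)"
    if "X \<in> building_closure F - {UNIV}" for X
    using that hface_facet_of_iff[OF assms] building_closure_nonempty[OF assms(1)]
    by (simp add: Compl_eq_Diff_UNIV)
  then show "tight F \<longleftrightarrow> (\<forall>X \<in> building_closure F - {UNIV}.
      hconnected X (restr F X) \<and> hconnected (UNIV - X) (contr F X))"
    unfolding tight_def by blast
  show "\<forall>X \<in> building_closure F. hconnected X (restr F X)"
    using hconnected_building_closure[OF assms(1)] by blast
qed

end
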